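(* Let $G=(V,E)$ be an unweighted graph with $n$ vertices and let $k\geq 2$ be an integer. Run the clustering defined in the context with $r=k-1$ and $p=1-n^{-1/k}$. Let $T=\{(p_{c_x}(x),x): x\in V,\ x\neq c_x\}$ be the support forest and let $F=\bigcup_{x\in V}C(x)$, where $C(x)=\{(x,p_u(x)) : u\neq x,\ d^{(u)}(s,x)=d_{G'}(s,x)\}\cup\{(x,p_u(x)) : u\neq x,\ d^{(u)}(s,x)=d_{G'}(s,x)+1,\ \mathrm{ID}(u)<\mathrm{ID}(c_x)\}$. Then, for every outcome of the sampled values, $H=(V,T\cup F)$ is a spanner of $G$ of stretch $2k-1$, i.e., $d_H(u,v)\leq (2k-1)\,d_G(u,v)$ for all $u,v\in V$.
   Context: Setting (the clustering): $G=(V,E)$ is an unweighted graph with shortest-path distance $d_G$, and each vertex has a distinct identifier $\mathrm{ID}(v)$. Let $p\in(0,1)$ and $r\in\mathbb{N}$. Let $\mathrm{GeomCap}(p,r)$ be the distribution on $\{0,\dots,r\}$ with $\Pr[=i]=p(1-p)^i$ for $0\leq i\leq r-1$ and $\Pr[=r]=(1-p)^r$. Each vertex $v$ independently samples $\delta_v\sim\mathrm{GeomCap}(p,r)$. For $u,x\in V$ define $d^{(u)}(s,x):=r-\delta_u+d_G(u,x)$ and the level $d_{G'}(s,x):=\min_{u\in V} d^{(u)}(s,x)$. The cluster center $c_x$ of $x$ is the vertex $u$ with smallest $\mathrm{ID}$ among those with $d^{(u)}(s,x)=d_{G'}(s,x)$. For $u\neq x$ with $d_G(u,x)<\infty$,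 $p_u(x)$ denotes the predecessor of $x$ on an arbitrary but fixed shortest path from $u$ to $x$ in $G$. *)

theory Defs
  imports Main "HOL-Library.Extended_Nat"
begin

definition gdist :: "('a \<times> 'a) set \<Rightarrow> 'a \<Rightarrow> 'a \<Rightarrow> enat" where
  "gdist E u v = (INF xs \<in> {xs. xs \<noteq> [] \<and> hd xs = u \<and> last xs = v \<and>
                                successively (\<lambda>a b. (a, b) \<in> E) xs}.
                   enat (length xs - 1))"

definition dU :: "('a \<times> 'a) set \<Rightarrow> nat \<Rightarrow> ('a \<Rightarrow> nat) \<Rightarrow> 'a \<Rightarrow> 'a \<Rightarrow> enat" where
  "dU E r \<delta> u x = enat (r - \<delta> u) + gdist E u x"

definition level :: "'a set \<Rightarrow> ('a \<times> 'a) set \<Rightarrow> nat \<Rightarrow> ('a \<Rightarrow> nat) \<Rightarrow> 'a \<Rightarrow> enat" where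
  "level V E r \<delta> x = (INF u \<in> V. dU E r \<delta> u x)"

definition center :: "'a set \<Rightarrow> ('a \<times> 'a) set \<Rightarrow> nat \<Rightarrow> ('a \<Rightarrow> nat) \<Rightarrow> ('a \<Rightarrow> nat) \<Rightarrow> 'a \<Rightarrow> 'a" where
  "center V E r \<delta> ID x = arg_min ID (\<lambda>u. u \<in> V \<and> dU E r \<delta> u x = level V E r \<delta> x)"

definition valid_pred :: "'a set \<Rightarrow> ('a \<times> 'a) set \<Rightarrow> ('a \<Rightarrow> 'a \<Rightarrow> 'a) \<Rightarrow> bool" where
  "valid_pred V E pr \<longleftrightarrow> (\<forall>u\<in>V. \<forall>x\<in>V. u \<noteq> x \<and> gdist E u x \<noteq> \<infinity> \<longrightarrow>
      pr u x \<in> V \<and> (pr u x, x) \<in> E \<and> gdist E u (pr u x) + 1 = gdist E u x)"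

definition supportT :: "'a set \<Rightarrow> ('a \<times> 'a) set \<Rightarrow> nat \<Rightarrow> ('a \<Rightarrow> nat) \<Rightarrow> ('a \<Rightarrow> nat)
    \<Rightarrow> ('a \<Rightarrow> 'a \<Rightarrow> 'a) \<Rightarrow> ('a \<times> 'a) set" where
  "supportT V E r \<delta> ID pr =
     {(pr (center V E r \<delta> ID x) x, x) | x. x \<in> V \<and> x \<noteq> center V E r \<delta> ID x}"

definition Cset :: "'a set \<Rightarrow> ('a \<times> 'a) set \<Rightarrow> nat \<Rightarrow> ('a \<Rightarrow> nat) \<Rightarrow> ('a \<Rightarrow> nat)
    \<Rightarrow> ('a \<Rightarrow> 'a \<Rightarrow> 'a) \<Rightarrow> 'a \<Rightarrow> ('a \<times> 'a) set" where
  "Cset V E r \<delta> ID pr x =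
     {(x, pr u x) | u. u \<in> V \<and> u \<noteq> x \<and> dU E r \<delta> u x = level V E r \<delta> x}
   \<union> {(x, pr u x) | u. u \<in> V \<and> u \<noteq> x \<and> dU E r \<delta> u x = level V E r \<delta> x + 1
         \<and> ID u < ID (center V E r \<delta> ID x)}"

definition spannerH :: "'a set \<Rightarrow> ('a \<times> 'a) set \<Rightarrow> nat \<Rightarrow> ('a \<Rightarrow> nat) \<Rightarrow> ('a \<Rightarrow> nat)
    \<Rightarrow> ('a \<Rightarrow> 'a \<Rightarrow> 'a) \<Rightarrow> ('a \<times> 'a) set" where
  "spannerH V E r \<delta> ID pr =
     (let S = supportT V E r \<delta> ID pr \<union> (\<Union>x\<in>V. Cset V E r \<delta> ID pr x) in S \<union> S\<inverse>)"

end

theory Submission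
  imports Defs
begin

text \<open>Say that x retains u if C(x) contains the edge from x towards u. This property is inherited
  by p_u(x), so H contains a whole shortest path from x to u. Every vertex retains its centre, which
  lies within distance r, and across every edge xy of G either y retains c_x or x retains c_y. Thus
  each edge of G is replaced in H by a path of length at most 2r + 1 = 2k - 1 through a centre, and
  the stretch bound follows by summing along a shortest path.\<close>

abbreviation walk :: "('a \<times> 'a) set \<Rightarrow> 'a list \<Rightarrow> 'a \<Rightarrow> 'a \<Rightarrow> bool" where
  "walk E xs u v \<equiv> xs \<noteq> [] \<and> hd xs = u \<and> last xs = v \<and> successively (\<lambda>a b. (a, b) \<in> E) xs"

lemma walk_append:
  assumes "walk E xs u v" and "walk E ys v w"
  shows "walk E (xs @ tl ys) u w"
  using assms by (cases ys) (auto simp: successively_append_iff successively_Cons)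

lemma walk_rev:
  assumes "sym E" and "walk E xs u v"
  shows "walk E (rev xs) v u"
  using assms by (auto simp: hd_rev last_rev sym_def elim!: successively_mono)

lemma gdist_le_walk:
  assumes "walk E xs u v"
  shows "gdist E u v \<le> enat (length xs - 1)"
  unfolding gdist_def by (rule INF_lower) (simp add: assms)

lemma gdist_shortest_walk:
  assumes "gdist E u v \<noteq> \<infinity>"
  obtains xs where "walk E xs u v" and "gdist E u v = enat (length xs - 1)"
proof -
  obtain xs0 where "xs0 \<in> {xs. walk E xs u v}"
  proof (cases "{xs. walk E xs u v} = {}")
    case True
    then have "gdist E u v = \<infinity>" unfolding gdist_def True by (simp add: top_enat_def)
    with assms show ?thesis ..
  qed blast
  then have "gdist E u v \<in> (\<lambda>xs. enat (length xs - 1)) ` {xs. walk E xs u v}"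
    unfolding gdist_def by (rule wellorder_InfI[OF imageI])
  then show thesis using that by blast
qed

lemma gdist_refl [simp]: "gdist E u u = 0"
  using gdist_le_walk[where xs="[u]" and u=u and v=u] by (simp add: zero_enat_def[symmetric])

lemma gdist_eq_0_iff: "gdist E u v = 0 \<longleftrightarrow> u = v"
proof
  assume "gdist E u v = 0"
  then obtain xs where "walk E xs u v" and "enat (length xs - 1) = 0"
    by (metis gdist_shortest_walk i0_ne_infinity)
  then show "u = v" by (cases xs) (auto simp: zero_enat_def)
qed simp

lemma gdist_edge: "(u, v) \<in> E \<Longrightarrow> gdist E u v \<le> 1"
  using gdist_le_walk[where xs="[u, v]" and u=u and v=v] by (simp add: one_enat_def)

lemma gdist_triangle: "gdist E u w \<le> gdist E u v + gdist E v w"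
proof (cases "gdist E u v = \<infinity> \<or> gdist E v w = \<infinity>")
  case False
  then obtain xs ys where xs: "walk E xs u v" "gdist E u v = enat (length xs - 1)"
    and ys: "walk E ys v w" "gdist E v w = enat (length ys - 1)"
    by (metis gdist_shortest_walk)
  have "length (xs @ tl ys) - 1 = (length xs - 1) + (length ys - 1)"
    using xs(1) ys(1) by (cases xs; cases ys) auto
  then show ?thesis
    using gdist_le_walk[OF walk_append[OF xs(1) ys(1)]] xs(2) ys(2) by simp
qed (auto simp: plus_eq_infty_iff_enat)

lemma gdist_edge_step:
  assumes "(x, y) \<in> E" shows "gdist E u y \<le> gdist E u x + 1"
proof -
  have "gdist E u y \<le> gdist E u x + gdist E x y" by (rule gdist_triangle)
  also have "\<dots> \<le> gdist E u x + 1" using gdist_edge[OF assms] by (rule add_left_mono)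
  finally show ?thesis .
qed

lemma gdist_commute:
  assumes "sym E" shows "gdist E u v = gdist E v u"
proof -
  have "gdist E a b \<le> gdist E b a" for a b
  proof (cases "gdist E b a = \<infinity>")
    case False
    then obtain xs where "walk E xs b a" and "gdist E b a = enat (length xs - 1)"
      by (metis gdist_shortest_walk)
    then show ?thesis using gdist_le_walk[OF walk_rev[OF assms]] by fastforce
  qed simp
  then show ?thesis by (metis order_antisym)
qed

lemma gdist_walk_stretch:
  assumes "\<And>x y. (x, y) \<in> E \<Longrightarrow> gdist F x y \<le> enat c" and "walk E xs u v"
  shows "gdist F u v \<le> enat (c * (length xs - 1))"
  using assms(2)
proof (induction xs arbitrary: u)
  case (Cons x ys)
  show ?case
  proof (cases ys)
    case Nil
    then show ?thesis using Cons.prems by (auto simp: zero_enat_def[symmetric])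
  next
    case (Cons y zs)
    with Cons.prems have "(u, y) \<in> E" and "walk E ys y v" by auto
    then have "gdist F u y \<le> enat c" and "gdist F y v \<le> enat (c * (length ys - 1))"
      using Cons.IH assms(1) by blast+
    then have "gdist F u v \<le> enat c + enat (c * (length ys - 1))"
      using gdist_triangle[of F u v y] add_mono order_trans by blast
    also have "\<dots> = enat (c * (length (x # ys) - 1))"
      using Cons by (simp add: algebra_simps)
    finally show ?thesis .
  qed
qed simp

lemma gdist_le_stretch:
  assumes "\<And>x y. (x, y) \<in> E \<Longrightarrow> gdist F x y \<le> enat c" and "c > 0"
  shows "gdist F u v \<le> enat c * gdist E u v"
proof (cases "gdist E u v = \<infinity>")
  case False
  then obtain xs where walk: "walk E xs u v" and len: "gdist E u v = enat (length xs - 1)"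
    by (metis gdist_shortest_walk)
  have "gdist F u v \<le> enat (c * (length xs - 1))"
    using assms(1) walk by (rule gdist_walk_stretch)
  then show ?thesis using len by simp
qed (use assms(2) in \<open>simp add: imult_is_infinity\<close>)

locale clustering =
  fixes V :: "'a set" and E :: "('a \<times> 'a) set" and r :: nat and \<delta> :: "'a \<Rightarrow> nat"
    and ID :: "'a \<Rightarrow> nat" and pr :: "'a \<Rightarrow> 'a \<Rightarrow> 'a"
  assumes edges_in_V: "E \<subseteq> V \<times> V" and sym_E: "sym E"
    and inj_ID: "inj_on ID V" and pred_valid: "valid_pred V E pr"
begin

abbreviation du :: "'a \<Rightarrow> 'a \<Rightarrow> enat" where "du u x \<equiv> dU E r \<delta> u x"
abbreviation lvl :: "'a \<Rightarrow> enat" where "lvl x \<equiv> level V E r \<delta> x"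
abbreviation ctr :: "'a \<Rightarrow> 'a" where "ctr x \<equiv> center V E r \<delta> ID x"
abbreviation H :: "('a \<times> 'a) set" where "H \<equiv> spannerH V E r \<delta> ID pr"

lemma level_le_dU: "u \<in> V \<Longrightarrow> lvl x \<le> du u x"
  unfolding level_def by (rule INF_lower)

lemma level_attained:
  assumes "x \<in> V" obtains u where "u \<in> V" and "du u x = lvl x"
proof -
  have "lvl x \<in> (\<lambda>u. du u x) ` V"
    unfolding level_def by (rule wellorder_InfI[OF imageI[OF assms]])
  then obtain u where "u \<in> V" and "lvl x = du u x" by (rule imageE)
  then show thesis using that by simp
qed

lemma level_le_r:
  assumes "x \<in> V" shows "lvl x \<le> enat r"
proof -
  have "lvl x \<le> enat (r - \<delta> x)" using level_le_dU[OF assms, of x] by (simp add: dU_def)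
  also have "\<dots> \<le> enat r" by simp
  finally show ?thesis .
qed

lemma
  assumes "x \<in> V"
  shows center_in_V: "ctr x \<in> V" and dU_center: "du (ctr x) x = lvl x"
proof -
  obtain u where "u \<in> V" and "du u x = lvl x" using level_attained[OF assms] .
  then have "ctr x \<in> V \<and> du (ctr x) x = lvl x"
    unfolding center_def by (rule arg_min_natI[of "\<lambda>u. u \<in> V \<and> du u x = lvl x", OF conjI])
  then show "ctr x \<in> V" and "du (ctr x) x = lvl x" by simp_all
qed

lemma center_ID_le: "u \<in> V \<Longrightarrow> du u x = lvl x \<Longrightarrow> ID (ctr x) \<le> ID u"
  unfolding center_def by (rule arg_min_nat_le) simp

lemma dU_edge: "(x, y) \<in> E \<Longrightarrow> du u y \<le> du u x + 1"
  unfolding dU_def by (metis add.assoc add_left_mono gdist_edge_step)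

lemma level_edge:
  assumes "(x, y) \<in> E" shows "lvl y \<le> lvl x + 1"
proof -
  have "x \<in> V" using assms edges_in_V by blast
  then obtain u where "u \<in> V" and "du u x = lvl x" by (rule level_attained)
  then show ?thesis using level_le_dU[of u y] dU_edge[OF assms, of u] by simp
qed

lemma
  assumes "u \<in> V" and "w \<in> V" and "u \<noteq> w" and "gdist E u w \<noteq> \<infinity>"
  shows pred_in_V: "pr u w \<in> V" and pred_edge: "(pr u w, w) \<in> E"
    and gdist_pred: "gdist E u (pr u w) + 1 = gdist E u w"
    and dU_pred: "du u (pr u w) + 1 = du u w"
proof -
  show "pr u w \<in> V" and "(pr u w, w) \<in> E" and pred: "gdist E u (pr u w) + 1 = gdist E u w"
    using pred_valid assms unfolding valid_pred_def by auto
  show "du u (pr u w) + 1 = du u w"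
    by (simp only: dU_def pred[symmetric] add.assoc)
qed

text \<open>For u \<noteq> x, retains u x says that C(x) contains the edge (x, p_u(x)).\<close>
definition retains :: "'a \<Rightarrow> 'a \<Rightarrow> bool" where
  "retains u x \<longleftrightarrow> du u x = lvl x \<or> (du u x = lvl x + 1 \<and> ID u < ID (ctr x))"

lemma retains_center: "x \<in> V \<Longrightarrow> retains (ctr x) x"
  unfolding retains_def by (simp add: dU_center)

lemma retains_gdist_le:
  assumes "x \<in> V" and "retains u x" shows "gdist E u x \<le> enat (r + 1)"
proof -
  have "gdist E u x \<le> du u x" unfolding dU_def by simp
  also have "\<dots> \<le> lvl x + 1" using assms(2) unfolding retains_def by auto
  also have "\<dots> \<le> enat (r + 1)" using add_right_mono[OF level_le_r[OF assms(1)], of 1] by (simp add: one_enat_def)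
  finally show ?thesis .
qed

lemma retains_edge_in_H:
  assumes "u \<in> V" and "w \<in> V" and "u \<noteq> w" and "retains u w"
  shows "(w, pr u w) \<in> H"
proof -
  have "(w, pr u w) \<in> Cset V E r \<delta> ID pr w"
    using assms unfolding Cset_def retains_def by blast
  then show ?thesis using assms(2) unfolding spannerH_def Let_def by blast
qed

lemma sym_H: "sym H"
  unfolding spannerH_def Let_def sym_def by blast

lemma retains_pred:
  assumes u: "u \<in> V" and w: "w \<in> V" and "u \<noteq> w" and retains_w: "retains u w"
  shows "retains u (pr u w)"
proof -
  define z where "z = pr u w"
  have "gdist E u w \<noteq> \<infinity>" using enat_ile[OF retains_gdist_le[OF w retains_w]] by auto
  then have z: "z \<in> V" and zw: "(z, w) \<in> E" and dz: "du u z + 1 = du u w"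
    using pred_in_V pred_edge dU_pred u w \<open>u \<noteq> w\<close> unfolding z_def by blast+
  obtain Lw Lz where Lw: "lvl w = enat Lw" and Lz: "lvl z = enat Lz"
    using enat_ile[OF level_le_r[OF w]] enat_ile[OF level_le_r[OF z]] by blast
  have "du u z + 1 \<le> enat (Lw + 1)"
    using dz retains_w Lw unfolding retains_def by (auto simp: one_enat_def)
  then obtain D where D: "du u z = enat D" by (cases "du u z") auto
  have "Lw \<le> Lz + 1" using level_edge[OF zw] Lw Lz by (simp add: one_enat_def)
  moreover have "Lz \<le> D" using level_le_dU[OF u, of z] Lz D by simp
  moreover have du_w: "du u w = enat (D + 1)" using dz D by (simp add: one_enat_def)
  moreover from retains_w consider "du u w = lvl w" | "du u w = lvl w + 1" and "ID u < ID (ctr w)"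
    unfolding retains_def by blast
  ultimately consider (level) "D = Lz" | (above_same) "D = Lw" "Lz = Lw"
    | (above_lower) "D = Lw" "Lw = Lz + 1" "ID u < ID (ctr w)"
    using Lw by (cases; force simp: one_enat_def)
  then show ?thesis
  proof cases
    case above_lower
    text \<open>The level drops along the edge from w to z, so ctr z also attains the level of w.\<close>
    have "du (ctr z) w \<le> lvl w"
      using dU_edge[OF zw, of "ctr z"] dU_center[OF z] Lw Lz above_lower by (simp add: one_enat_def)
    then have "du (ctr z) w = lvl w"
      using level_le_dU[OF center_in_V[OF z]] by (simp add: order_antisym)
    then have "ID (ctr w) \<le> ID (ctr z)" using center_ID_le center_in_V[OF z] by blast
    then show ?thesis
      using above_lower D Lz unfolding retains_def z_def by (simp add: one_enat_def)
  qed (use D Lz Lw in \<open>simp_all add: retains_def z_def\<close>)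
qed

lemma retains_gdist_H:
  assumes "u \<in> V" and "w \<in> V" and "retains u w"
  shows "gdist H w u \<le> gdist E u w"
proof -
  have "gdist H w u \<le> enat n" if "w \<in> V" and "retains u w" and "gdist E u w = enat n" for n w
    using that
  proof (induction n arbitrary: w)
    case 0
    then show ?case by (simp add: zero_enat_def[symmetric] gdist_eq_0_iff)
  next
    case (Suc n)
    then have "u \<noteq> w" by (metis Zero_not_Suc enat.inject gdist_refl zero_enat_def)
    with assms(1) Suc.prems have "gdist E u (pr u w) + 1 = enat (Suc n)"
      using gdist_pred by simp
    then have "gdist E u (pr u w) = enat n"
      by (metis eSuc_enat eSuc_inject eSuc_plus_1)
    then have "gdist H (pr u w) u \<le> enat n"
      using Suc.IH pred_in_V retains_pred assms(1) Suc.prems \<open>u \<noteq> w\<close> by simp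
    moreover have "gdist H w (pr u w) \<le> 1"
      using gdist_edge[OF retains_edge_in_H[OF assms(1) Suc.prems(1) \<open>u \<noteq> w\<close> Suc.prems(2)]] .
    moreover have "gdist H w u \<le> gdist H w (pr u w) + gdist H (pr u w) u"
      by (rule gdist_triangle)
    ultimately have "gdist H w u \<le> 1 + enat n"
      by (meson add_mono order_trans)
    then show ?case by (simp add: one_enat_def)
  qed
  moreover obtain n where "gdist E u w = enat n"
    using enat_ile[OF retains_gdist_le[OF assms(2,3)]] by blast
  ultimately show ?thesis using assms(2,3) by simp
qed

text \<open>If neither held, x and y would lie on the same level L while d^(c_x)(s,y) = d^(c_y)(s,x) = L + 1,
  and each centre would have the smaller ID.\<close>
lemma retains_center_across_edge:
  assumes xy: "(x, y) \<in> E"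
  shows "retains (ctr x) y \<or> retains (ctr y) x"
proof (rule ccontr)
  assume neither: "\<not> (retains (ctr x) y \<or> retains (ctr y) x)"
  have x: "x \<in> V" and y: "y \<in> V" and yx: "(y, x) \<in> E"
    using xy edges_in_V sym_E by (auto simp: sym_def)
  define a b where "a = ctr x" and "b = ctr y"
  have a: "a \<in> V" "du a x = lvl x" and b: "b \<in> V" "du b y = lvl y"
    unfolding a_def b_def using center_in_V dU_center x y by auto
  have "du a y \<le> lvl x + 1" and "du b x \<le> lvl y + 1"
    using dU_edge[OF xy, of a] dU_edge[OF yx, of b] a b by simp_all
  moreover have "lvl y \<le> du a y" and "lvl x \<le> du b x"
    using level_le_dU a b by auto
  moreover have "du a y \<noteq> lvl y" and "du b x \<noteq> lvl x"
    using neither unfolding retains_def a_def b_def by auto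
  moreover obtain Lx Ly where "lvl x = enat Lx" and "lvl y = enat Ly"
    using level_le_r[OF x] level_le_r[OF y] by (cases "lvl x"; cases "lvl y") auto
  ultimately have "du a y = lvl y + 1" and "du b x = lvl x + 1" and "lvl x = lvl y"
    by (cases "du a y"; cases "du b x"; simp add: one_enat_def)+
  then have "ID b \<le> ID a" and "ID a \<le> ID b"
    using neither unfolding retains_def a_def b_def by auto
  then have "a = b" using inj_ID a b by (auto simp: inj_on_def)
  then have "lvl y + 1 = lvl y" using \<open>du a y = lvl y + 1\<close> b(2) by simp
  then show False using \<open>lvl y = enat Ly\<close> by (simp add: one_enat_def)
qed

lemma gdist_H_via_center:
  assumes xy: "(x, y) \<in> E" and retains_y: "retains (ctr x) y"
  shows "gdist H y x \<le> enat (2 * r + 1)"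
proof -
  define a where "a = ctr x"
  have x: "x \<in> V" and y: "y \<in> V" using xy edges_in_V by auto
  have a: "a \<in> V" using center_in_V[OF x] a_def by simp
  have "gdist E a x \<le> du a x" unfolding dU_def by simp
  also have "\<dots> = lvl x" using dU_center[OF x] a_def by simp
  also have "\<dots> \<le> enat r" by (rule level_le_r[OF x])
  finally have ax: "gdist E a x \<le> enat r" .
  have "gdist H y x \<le> gdist H y a + gdist H a x" by (rule gdist_triangle)
  also have "\<dots> \<le> gdist E a y + gdist E a x"
    using retains_gdist_H[OF a y] retains_y retains_gdist_H[OF a x] retains_center[OF x]
      gdist_commute[OF sym_H, of a x] unfolding a_def by (simp add: add_mono)
  also have "\<dots> \<le> (gdist E a x + 1) + gdist E a x"
    using gdist_edge_step[OF xy] by (rule add_right_mono)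
  also have "\<dots> \<le> (enat r + 1) + enat r"
    using ax by (intro add_mono order_refl)
  finally show ?thesis by (simp add: one_enat_def mult_2)
qed

lemma gdist_H_edge:
  assumes xy: "(x, y) \<in> E" shows "gdist H x y \<le> enat (2 * r + 1)"
proof -
  have yx: "(y, x) \<in> E" using xy sym_E by (auto simp: sym_def)
  from retains_center_across_edge[OF xy] show ?thesis
  proof
    assume "retains (ctr x) y"
    then show ?thesis using gdist_H_via_center[OF xy] gdist_commute[OF sym_H, of x y] by simp
  next
    assume "retains (ctr y) x"
    then show ?thesis using gdist_H_via_center[OF yx] by simp
  qed
qed

end

theorem lemma10:
  fixes V :: "'a set" and E :: "('a \<times> 'a) set" and ID :: "'a \<Rightarrow> nat"
    and \<delta> :: "'a \<Rightarrow> nat" and pr :: "'a \<Rightarrow> 'a \<Rightarrow> 'a" and k :: nat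
  assumes "finite V" and "E \<subseteq> V \<times> V" and "sym E"
    and "inj_on ID V"
    and "k \<ge> 2"
    and "\<forall>v\<in>V. \<delta> v \<le> k - 1"
    and "valid_pred V E pr"
  shows "\<forall>u\<in>V. \<forall>v\<in>V.
           gdist (spannerH V E (k - 1) \<delta> ID pr) u v \<le> enat (2 * k - 1) * gdist E u v"
proof -
  interpret clustering V E "k - 1" \<delta> ID pr
    using assms by unfold_locales
  have stretch: "2 * (k - 1) + 1 = 2 * k - 1" using \<open>k \<ge> 2\<close> by simp
  have "gdist H u v \<le> enat (2 * (k - 1) + 1) * gdist E u v" for u v
    by (rule gdist_le_stretch[OF gdist_H_edge]) simp_all
  then show ?thesis unfolding stretch by blast
qed

end
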